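(* Let $1\le k<n$ and let $V=\bigoplus_{i=1}^{2n-1}V_i$, $W=\bigoplus_{i=1}^{2n-1}W_i$ be graded complex vector spaces with $\dim V_i=\dim V_{2n-i}$, $W_i=0$ for $i\notin\{k,2n-k\}$, $W_k=W_{2n-k}$ one-dimensional, and satisfying the nonemptiness condition below. Then for every $(B_{i,j},\Gamma_i,\Delta_i)\in\Lambda^{\mathrm A_{2n-1}}(V,W)$: \[\Delta_kB_{k,k-j+1,k}\Gamma_k=(-1)^j\Delta_{2n-k}B_{2n-k,2n-k+j-1,2n-k}\Gamma_{2n-k},\] \[\Delta_kB_{k,k-j+1,2n-k}\Gamma_{2n-k}=(-1)^{j-1}\Delta_kB_{k,2n-k+j-1,2n-k}\Gamma_{2n-k},\] \[\Delta_{2n-k}B_{2n-k,k-j+1,k}\Gamma_k=(-1)^{j-1}\Delta_{2n-k}B_{2n-k,2n-k+j-1,k}\Gamma_k\] for $1\le j\le k$, and \[\Delta_{2n-k}B_{2n-k,2n-k-j+1,2n-k}\Gamma_{2n-k}=(-1)^j\Delta_kB_{k,k+j-1,k}\Gamma_k\] for $1\le j\le 2n-k$ (all these being scalars, using $W_k=W_{2n-k}$).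
   Context: $B_{i,j}$ ($|i-j|=1$) is a linear map $V_j\to V_i$, $\Gamma_i:W_i\to V_i$, $\Delta_i:V_i\to W_i$. $\Lambda^{\mathrm A_{2n-1}}(V,W)$ is the set of tuples satisfying (with $B_{0,1},B_{1,0},B_{2n,2n-1},B_{2n-1,2n}$ zero): $B_{i,i+1}B_{i+1,i}-B_{i,i-1}B_{i-1,i}=\Gamma_i\Delta_i$ for $1\le i\le n-1$; $-B_{n,n-1}B_{n-1,n}-B_{n,n+1}B_{n+1,n}=\Gamma_n\Delta_n$; $B_{i,i-1}B_{i-1,i}-B_{i,i+1}B_{i+1,i}=\Gamma_i\Delta_i$ for $n+1\le i\le2n-1$. Path notation: $B_{p,q,r}$ denotes the composite $V_r\to V_p$ of the maps $B_{\cdot,\cdot}$ along the path in the line $1,\dots,2n-1$ going from $r$ monotonically to $q$ and then monotonically to $p$ (e.g. $B_{k,k-j+1,2n-k}$ goes from $2n-k$ down to $k-j+1$ and then up to $k$); a path of length zero gives the identity. Nonemptiness condition: with $v_i=\dim V_i$, put $s_1=1-v_1$, $s_i=1-v_i+v_{i-1}$ for $2\le i\le k$, $s_i=-v_i+v_{i-1}$ for $k+1\le i\le n$; then $s_i\in\{-1,0,1\}$ for all $i$ and $|\{i:s_i\ne0\}|\le k$. *)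

theory Defs
  imports "Jordan_Normal_Form.Matrix"
begin

text \<open>Finite-dimensional complex vector spaces V_i are identified with complex^(v i)
  (after choosing bases); linear maps are complex matrices of the appropriate size.\<close>

function mono_path :: "(nat \<Rightarrow> nat \<Rightarrow> complex mat) \<Rightarrow> (nat \<Rightarrow> nat) \<Rightarrow> nat \<Rightarrow> nat \<Rightarrow> complex mat" where
  "mono_path B v q r =
     (if q = r then 1\<^sub>m (v r)
      else if q < r then B q (q+1) * mono_path B v (q+1) r
      else B q (q-1) * mono_path B v (q-1) r)"
  by pat_completeness auto
termination
  by (relation "measure (\<lambda>(B,v,q,r). if q < r then r - q else q - r)") auto

text \<open>B_{p,q,r}: from r monotonically to q, then monotonically to p.\<close>
definition path3 :: "(nat \<Rightarrow> nat \<Rightarrow> complex mat) \<Rightarrow> (nat \<Rightarrow> nat) \<Rightarrow> nat \<Rightarrow> nat \<Rightarrow> nat \<Rightarrow> complex mat" where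
  "path3 B v p q r = mono_path B v p q * mono_path B v q r"

definition Bz :: "nat \<Rightarrow> (nat \<Rightarrow> nat) \<Rightarrow> (nat \<Rightarrow> nat \<Rightarrow> complex mat) \<Rightarrow> nat \<Rightarrow> nat \<Rightarrow> complex mat" where
  "Bz n v B i j = (if 1 \<le> i \<and> i \<le> 2*n-1 \<and> 1 \<le> j \<and> j \<le> 2*n-1 then B i j else 0\<^sub>m (v i) (v j))"

text \<open>Membership in Lambda^{A_{2n-1}}(V,W), dim V_i = v i, dim W_i = w i.\<close>
definition Lambda_A :: "nat \<Rightarrow> (nat \<Rightarrow> nat) \<Rightarrow> (nat \<Rightarrow> nat) \<Rightarrow> (nat \<Rightarrow> nat \<Rightarrow> complex mat)
    \<Rightarrow> (nat \<Rightarrow> complex mat) \<Rightarrow> (nat \<Rightarrow> complex mat) \<Rightarrow> bool" where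
  "Lambda_A n v w B \<Gamma> \<Delta> \<longleftrightarrow>
     (\<forall>i. 1 \<le> i \<and> i < 2*n-1 \<longrightarrow>
        B i (i+1) \<in> carrier_mat (v i) (v (i+1)) \<and> B (i+1) i \<in> carrier_mat (v (i+1)) (v i)) \<and>
     (\<forall>i. 1 \<le> i \<and> i \<le> 2*n-1 \<longrightarrow>
        \<Gamma> i \<in> carrier_mat (v i) (w i) \<and> \<Delta> i \<in> carrier_mat (w i) (v i)) \<and>
     (\<forall>i. 1 \<le> i \<and> i \<le> n-1 \<longrightarrow>
        Bz n v B i (i+1) * Bz n v B (i+1) i - Bz n v B i (i-1) * Bz n v B (i-1) i = \<Gamma> i * \<Delta> i) \<and>
     (- (Bz n v B n (n-1) * Bz n v B (n-1) n) - Bz n v B n (n+1) * Bz n v B (n+1) n = \<Gamma> n * \<Delta> n) \<and>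
     (\<forall>i. n+1 \<le> i \<and> i \<le> 2*n-1 \<longrightarrow>
        Bz n v B i (i-1) * Bz n v B (i-1) i - Bz n v B i (i+1) * Bz n v B (i+1) i = \<Gamma> i * \<Delta> i)"

definition s_seq :: "nat \<Rightarrow> (nat \<Rightarrow> nat) \<Rightarrow> nat \<Rightarrow> int" where
  "s_seq k v i =
     (if i = 1 then 1 - int (v 1)
      else if i \<le> k then 1 - int (v i) + int (v (i-1))
      else - int (v i) + int (v (i-1)))"

definition nonempty_cond :: "nat \<Rightarrow> nat \<Rightarrow> (nat \<Rightarrow> nat) \<Rightarrow> bool" where
  "nonempty_cond n k v \<longleftrightarrow>
     (\<forall>i\<in>{1..n}. s_seq k v i \<in> {-1, 0, 1}) \<and> card {i\<in>{1..n}. s_seq k v i \<noteq> 0} \<le> k"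

end

theory Submission
  imports Defs "HOL-Computational_Algebra.Polynomial"
begin

(* Put V and W = W_k = W_{2n-k} into one space, W as block 0, and let down and up be the block shift
   operators built from the maps B, up carrying the sign -1 on the steps starting at j >= n.
   The equations defining Lambda then say exactly
     down * up - up * down = gamma_k delta_k + gamma_k' delta_k'     (k' = 2n - k).
   For the generating functions G_ab(t) = delta_a (1 - t up)^-1 (1 - t down)^-1 gamma_b and
   H_ab(t) = delta_a (1 - t down)^-1 (1 - t up)^-1 gamma_b (a, b in {k, k'}) this gives
   G - H = - t^2 G H for the 2x2 matrices G, H, and hence G_kk = - H_k'k', G_k'k' = - H_kk,
   G_kk' = H_kk', G_k'k = H_k'k.  Each coefficient of G and H is a single composite
   Delta_a B_{a,q,b} Gamma_b up to sign, and comparing coefficients gives the four identities. *)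

declare mono_path.simps[simp del]

section \<open>Matrices and polynomials\<close>

lemma pow_mat_Suc_left:
  assumes A: "A \<in> carrier_mat n n"
  shows "A ^\<^sub>m Suc k = A * A ^\<^sub>m k"
proof (induction k)
  case (Suc k)
  have "A ^\<^sub>m Suc (Suc k) = A * A ^\<^sub>m k * A" using Suc by simp
  also have "\<dots> = A * (A ^\<^sub>m k * A)" using A by (simp add: assoc_mult_mat[of _ n n _ n _ n])
  finally show ?case by simp
qed (use A in simp)

lemma one_smult_mat[simp]: "(1::'a::monoid_mult) \<cdot>\<^sub>m A = A"
  by (rule eq_matI) auto

lemma smult_smult_mat: "a \<cdot>\<^sub>m (b \<cdot>\<^sub>m A) = (a * b) \<cdot>\<^sub>m (A :: 'a::semigroup_mult mat)"
  by (rule eq_matI) (auto simp: mult.assoc)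

lemma smult_pow_mat:
  fixes A :: "'a::comm_ring_1 mat"
  assumes A: "A \<in> carrier_mat n n"
  shows "(c \<cdot>\<^sub>m A) ^\<^sub>m p = (c ^ p) \<cdot>\<^sub>m (A ^\<^sub>m p)"
proof (induction p)
  case (Suc p)
  have "(c \<cdot>\<^sub>m A) ^\<^sub>m Suc p = (c ^ p \<cdot>\<^sub>m A ^\<^sub>m p) * (c \<cdot>\<^sub>m A)" using Suc by simp
  also have "\<dots> = (c ^ Suc p) \<cdot>\<^sub>m (A ^\<^sub>m Suc p)"
    using A by (intro eq_matI) (auto simp: scalar_prod_def sum_distrib_left mult_ac intro!: sum.cong)
  finally show ?case .
qed (auto intro!: eq_matI)

lemma pow_mat_eq_zero_if_weight_increasing:
  fixes Z :: "'a::semiring_1 mat"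
  assumes Z: "Z \<in> carrier_mat N N"
    and increasing: "\<And>r s. r < N \<Longrightarrow> s < N \<Longrightarrow> Z $$ (r,s) \<noteq> 0 \<Longrightarrow> w r < w s"
    and bounded: "\<And>r. r < N \<Longrightarrow> w r < p"
  shows "Z ^\<^sub>m p = 0\<^sub>m N N"
proof -
  have "(Z ^\<^sub>m q) $$ (r,s) = 0" if "r < N" "s < N" "w s < w r + q" for q r s
    using that
  proof (induction q arbitrary: s)
    case (Suc q)
    have "(Z ^\<^sub>m q) $$ (r,x) * Z $$ (x,s) = 0" if "x < N" for x
      using Suc.IH[of x] increasing[of x s] Suc.prems that by fastforce
    then show ?case using Z Suc.prems by (simp add: scalar_prod_def)
  qed (use Z in auto)
  then show ?thesis
    using Z bounded by (intro eq_matI) (auto simp: trans_less_add2)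
qed

fun mat_sum :: "nat \<Rightarrow> (nat \<Rightarrow> 'a::semiring_1 mat) \<Rightarrow> nat \<Rightarrow> 'a mat" where
  "mat_sum N f 0 = 0\<^sub>m N N"
| "mat_sum N f (Suc p) = mat_sum N f p + f p"

context
  fixes N :: nat and f :: "nat \<Rightarrow> 'a::semiring_1 mat"
  assumes f: "\<And>i. f i \<in> carrier_mat N N"
begin

lemma mat_sum_carrier[simp]: "mat_sum N f p \<in> carrier_mat N N"
  by (induction p) (auto simp: f)

lemma mult_mat_sum: "Z \<in> carrier_mat N N \<Longrightarrow> Z * mat_sum N f p = mat_sum N (\<lambda>i. Z * f i) p"
  by (induction p) (auto simp: mult_add_distrib_mat[OF _ mat_sum_carrier f])

lemma mat_sum_mult: "Z \<in> carrier_mat N N \<Longrightarrow> mat_sum N f p * Z = mat_sum N (\<lambda>i. f i * Z) p"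
  by (induction p) (auto simp: add_mult_distrib_mat[OF mat_sum_carrier f])

end

lemma mat_sum_mult_mat_sum:
  assumes "\<And>i. f i \<in> carrier_mat N N" "\<And>j. g j \<in> carrier_mat N N"
  shows "mat_sum N f p * mat_sum N g q = mat_sum N (\<lambda>i. mat_sum N (\<lambda>j. f i * g j) q) p"
  using assms by (simp add: mat_sum_mult[OF assms(1) mat_sum_carrier[OF assms(2)]] mult_mat_sum[OF assms(2)])

lemma geometric_mat_sum:
  fixes Z :: "'a::comm_ring_1 mat"
  assumes Z: "Z \<in> carrier_mat N N"
  shows "(1\<^sub>m N - Z) * mat_sum N (\<lambda>i. Z ^\<^sub>m i) p = 1\<^sub>m N - Z ^\<^sub>m p"
    and "mat_sum N (\<lambda>i. Z ^\<^sub>m i) p * (1\<^sub>m N - Z) = 1\<^sub>m N - Z ^\<^sub>m p"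
proof -
  have S: "mat_sum N (\<lambda>i. Z ^\<^sub>m i) p \<in> carrier_mat N N" for p using Z by simp
  have step: "1\<^sub>m N - Z ^\<^sub>m p + (Z ^\<^sub>m p - Z ^\<^sub>m Suc p) = 1\<^sub>m N - Z ^\<^sub>m Suc p" for p
    using Z by (intro eq_matI) auto
  show "(1\<^sub>m N - Z) * mat_sum N (\<lambda>i. Z ^\<^sub>m i) p = 1\<^sub>m N - Z ^\<^sub>m p"
  proof (induction p)
    case (Suc p)
    have "(1\<^sub>m N - Z) * Z ^\<^sub>m p = Z ^\<^sub>m p - Z ^\<^sub>m Suc p"
      using Z by (simp add: minus_mult_distrib_mat[of _ N N _ _ N] pow_mat_Suc_left[OF Z, of p] del: pow_mat.simps)
    moreover have "(1\<^sub>m N - Z) * mat_sum N (\<lambda>i. Z ^\<^sub>m i) (Suc p)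
        = (1\<^sub>m N - Z) * mat_sum N (\<lambda>i. Z ^\<^sub>m i) p + (1\<^sub>m N - Z) * Z ^\<^sub>m p"
      unfolding mat_sum.simps by (rule mult_add_distrib_mat) (use Z S in auto)
    ultimately show ?case using Suc step by simp
  qed (use Z in \<open>auto intro!: eq_matI\<close>)
  show "mat_sum N (\<lambda>i. Z ^\<^sub>m i) p * (1\<^sub>m N - Z) = 1\<^sub>m N - Z ^\<^sub>m p"
  proof (induction p)
    case (Suc p)
    have "Z ^\<^sub>m p * (1\<^sub>m N - Z) = Z ^\<^sub>m p - Z ^\<^sub>m Suc p"
      using Z by (simp add: mult_minus_distrib_mat[of _ N N _ N])
    moreover have "mat_sum N (\<lambda>i. Z ^\<^sub>m i) (Suc p) * (1\<^sub>m N - Z)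
        = mat_sum N (\<lambda>i. Z ^\<^sub>m i) p * (1\<^sub>m N - Z) + Z ^\<^sub>m p * (1\<^sub>m N - Z)"
      unfolding mat_sum.simps by (rule add_mult_distrib_mat[OF S]) (use Z in auto)
    ultimately show ?case using Suc step by simp
  qed (use Z in \<open>auto intro!: eq_matI\<close>)
qed

lemma nilpotent_one_minus_inverse:
  fixes Z :: "'a::comm_ring_1 mat"
  assumes Z: "Z \<in> carrier_mat N N" and nil: "Z ^\<^sub>m p = 0\<^sub>m N N"
  shows "(1\<^sub>m N - Z) * mat_sum N (\<lambda>i. Z ^\<^sub>m i) p = 1\<^sub>m N" "mat_sum N (\<lambda>i. Z ^\<^sub>m i) p * (1\<^sub>m N - Z) = 1\<^sub>m N"
  using geometric_mat_sum[OF Z, of p] nil by (auto intro!: eq_matI)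

lemma commutator_of_inverses:
  fixes X Xi Y Yi :: "'a::comm_ring_1 mat"
  assumes c: "X \<in> carrier_mat N N" "Xi \<in> carrier_mat N N" "Y \<in> carrier_mat N N" "Yi \<in> carrier_mat N N"
    and i: "X * Xi = 1\<^sub>m N" "Xi * X = 1\<^sub>m N" "Y * Yi = 1\<^sub>m N" "Yi * Y = 1\<^sub>m N"
  shows "Xi * Yi - Yi * Xi = Xi * Yi * (X * Y - Y * X) * (Yi * Xi)"
proof -
  have "Xi * Yi * (X * Y - Y * X) * (Yi * Xi) = Xi * Yi * (X * Y) * (Yi * Xi) - Xi * Yi * (Y * X) * (Yi * Xi)"
    using c by (simp add: mult_minus_distrib_mat[of _ N N _ N] minus_mult_distrib_mat[of _ N N _ _ N]
        mult_carrier_mat[of _ N N _ N] del: assoc_mult_mat)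
  also have "Xi * Yi * (X * Y) * (Yi * Xi) = Xi * Yi * X * (Y * Yi) * Xi"
    using c by (simp add: assoc_mult_mat[of _ N N _ N _ N])
  also have "\<dots> = Xi * Yi * X * 1\<^sub>m N * Xi" by (simp only: i)
  also have "\<dots> = Xi * Yi * (X * Xi)" using c by (simp add: assoc_mult_mat[of _ N N _ N _ N])
  also have "\<dots> = Xi * Yi" using c i by simp
  also have "Xi * Yi * (Y * X) * (Yi * Xi) = Xi * (Yi * Y) * (X * Yi * Xi)"
    using c by (simp add: assoc_mult_mat[of _ N N _ N _ N])
  also have "\<dots> = Xi * 1\<^sub>m N * (X * Yi * Xi)" by (simp only: i)
  also have "\<dots> = (Xi * X) * (Yi * Xi)" using c by (simp add: assoc_mult_mat[of _ N N _ N _ N])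
  also have "\<dots> = Yi * Xi" using c i by simp
  finally show ?thesis ..
qed

lemma commutator_one_minus:
  fixes A C :: "'a::comm_ring_1 mat"
  assumes "A \<in> carrier_mat N N" "C \<in> carrier_mat N N"
  shows "(1\<^sub>m N - C) * (1\<^sub>m N - A) - (1\<^sub>m N - A) * (1\<^sub>m N - C) = C * A - A * C"
proof -
  have "(1\<^sub>m N - X) * (1\<^sub>m N - Y) = (1\<^sub>m N - X) - (Y - X * Y)"
    if "X \<in> carrier_mat N N" "Y \<in> carrier_mat N N" for X Y :: "'a mat"
    using that by (simp add: mult_minus_distrib_mat[of _ N N _ N] minus_mult_distrib_mat[of _ N N _ _ N]
        minus_carrier_mat)
  then show ?thesis using assms by (intro eq_matI) (auto simp: algebra_simps)
qed

(* The hypotheses say G - H = - x G H for the 2x2 matrices G = (g_ij), H = (h_ij), i.e.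
   (I - x G)(I + x H) = I.  So det (I + x H) is a unit, hence equal to its constant term 1,
   and I - x G is the adjugate of I + x H. *)
lemma poly_2x2_relation_adjugate:
  fixes x g11 g12 g21 g22 h11 h12 h21 h22 :: "'a::idom poly"
  assumes x: "x \<noteq> 0" "poly x 0 = 0"
    and r11: "g11 - h11 = - x * (g11 * h11 + g12 * h21)"
    and r12: "g12 - h12 = - x * (g11 * h12 + g12 * h22)"
    and r21: "g21 - h21 = - x * (g21 * h11 + g22 * h21)"
    and r22: "g22 - h22 = - x * (g21 * h12 + g22 * h22)"
  shows "g11 = - h22 \<and> g22 = - h11 \<and> g12 = h12 \<and> g21 = h21"
proof -
  define q11 q12 q21 q22 where "q11 = 1 - x * g11" "q12 = - x * g12" "q21 = - x * g21" "q22 = 1 - x * g22"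
  define p11 p12 p21 p22 where "p11 = 1 + x * h11" "p12 = x * h12" "p21 = x * h21" "p22 = 1 + x * h22"
  note defs = q11_q12_q21_q22_def p11_p12_p21_p22_def
  have "q11 * p11 + q12 * p21 = 1 + x * (h11 - g11 - x * (g11 * h11 + g12 * h21))"
    "q11 * p12 + q12 * p22 = x * (h12 - g12 - x * (g11 * h12 + g12 * h22))"
    "q21 * p11 + q22 * p21 = x * (h21 - g21 - x * (g21 * h11 + g22 * h21))"
    "q21 * p12 + q22 * p22 = 1 + x * (h22 - g22 - x * (g21 * h12 + g22 * h22))"
    unfolding defs by (simp_all add: algebra_simps)
  moreover have "h11 - g11 - x * (g11 * h11 + g12 * h21) = 0" "h12 - g12 - x * (g11 * h12 + g12 * h22) = 0"
    "h21 - g21 - x * (g21 * h11 + g22 * h21) = 0" "h22 - g22 - x * (g21 * h12 + g22 * h22) = 0"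
    using r11 r12 r21 r22 by (simp_all add: algebra_simps)
  ultimately have E: "q11 * p11 + q12 * p21 = 1" "q11 * p12 + q12 * p22 = 0"
    "q21 * p11 + q22 * p21 = 0" "q21 * p12 + q22 * p22 = 1"
    by simp_all
  define D where "D = p11 * p22 - p12 * p21"
  have "(q11 * q22 - q12 * q21) * D
      = (q11 * p11 + q12 * p21) * (q21 * p12 + q22 * p22) - (q11 * p12 + q12 * p22) * (q21 * p11 + q22 * p21)"
    unfolding D_def by (simp add: algebra_simps)
  then have "D dvd 1" using E by (metis dvd_triv_right mult_1 mult_zero_left diff_zero)
  then obtain c where c: "D = [:c:]" using is_unit_poly_iff by blast
  have "poly D 0 = 1" using x(2) by (simp add: D_def defs)
  then have D1: "D = 1" using c by simp
  have "q11 * D = p22 * (q11 * p11 + q12 * p21) - p21 * (q11 * p12 + q12 * p22)"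
    "q22 * D = p11 * (q21 * p12 + q22 * p22) - p12 * (q21 * p11 + q22 * p21)"
    "q12 * D = p11 * (q11 * p12 + q12 * p22) - p12 * (q11 * p11 + q12 * p21)"
    "q21 * D = p22 * (q21 * p11 + q22 * p21) - p21 * (q21 * p12 + q22 * p22)"
    unfolding D_def by (simp_all add: algebra_simps)
  then have "q11 = p22" "q22 = p11" "q12 = - p12" "q21 = - p21" using E D1 by simp_all
  then have "x * (g11 + h22) = 0" "x * (g22 + h11) = 0" "x * (g12 - h12) = 0" "x * (g21 - h21) = 0"
    unfolding defs by (simp_all add: algebra_simps)
  then show ?thesis using x(1) by (simp add: eq_neg_iff_add_eq_0)
qed

lemma neg_one_power_cancel:
  fixes L R :: "'a::comm_ring_1"
  assumes "(-1)^x * L = (-1)^y * R"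
  shows "L = (-1)^(x + y) * R"
proof -
  have "L = (-1)^x * ((-1)^x * L)" by (simp flip: power_add add: power_even_eq[symmetric])
  then show ?thesis using assms by (simp add: power_add)
qed

lemma coeff_monom_double_sum:
  assumes "p0 < N" "q0 < N"
    and unique: "\<And>p q. p < N \<Longrightarrow> q < N \<Longrightarrow> p + q = p0 + q0 \<Longrightarrow> f p q \<noteq> 0 \<Longrightarrow> p = p0 \<and> q = q0"
  shows "coeff (\<Sum>p<N. \<Sum>q<N. monom (f p q) (p + q)) (p0 + q0) = f p0 q0"
proof -
  have "(if p + q = p0 + q0 then f p q else 0) = (if p = p0 then if q = q0 then f p0 q0 else 0 else 0)"
    if "p < N" "q < N" for p q
    using unique[OF that] by auto
  then have "(\<Sum>p<N. \<Sum>q<N. if p + q = p0 + q0 then f p q else 0)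
      = (\<Sum>p<N. if p = p0 then \<Sum>q<N. if q = q0 then f p0 q0 else 0 else 0)"
    by (intro sum.cong refl) auto
  then show ?thesis using assms(1,2) by (simp add: coeff_sum coeff_monom)
qed

lemma entry_smult_mult_assoc:
  fixes D P Q G :: "'a::comm_ring_1 mat"
  assumes "D \<in> carrier_mat 1 na" "P \<in> carrier_mat na nc" "Q \<in> carrier_mat nc nb" "G \<in> carrier_mat nb 1"
  shows "(D * (c \<cdot>\<^sub>m (P * (Q * G)))) $$ (0,0) = c * (D * (P * Q) * G) $$ (0,0)"
  using assms by (simp add: mult_smult_distrib[of D 1 na _ 1] assoc_mult_mat[of D 1 na "P * Q" nb G 1])

section \<open>Block matrices\<close>

locale block_layout =
  fixes d :: "nat \<Rightarrow> nat" and K M :: nat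
  assumes block_dim_le: "\<And>i. d i \<le> M" and block_size_pos: "0 < M"
begin

definition total_dim :: nat where "total_dim = K * M"

(* Block i of a block matrix occupies the indices i * M ..< i * M + d i; the padding is zero. *)
definition block_mat :: "(nat \<Rightarrow> nat \<Rightarrow> 'a::comm_ring_1 mat) \<Rightarrow> 'a mat" where
  "block_mat F = mat total_dim total_dim (\<lambda>(r,s).
     if r mod M < d (r div M) \<and> s mod M < d (s div M)
     then F (r div M) (s div M) $$ (r mod M, s mod M) else 0)"

definition block_col :: "nat \<Rightarrow> 'a::comm_ring_1 mat \<Rightarrow> 'a mat" where
  "block_col x X = block_mat (\<lambda>i j. if i = x \<and> j = 0 then X else 0\<^sub>m (d i) (d j))"

lemma block_mat_carrier[simp]: "block_mat F \<in> carrier_mat total_dim total_dim"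
  by (simp add: block_mat_def)

lemma block_mat_dim[simp]: "dim_row (block_mat F) = total_dim" "dim_col (block_mat F) = total_dim"
  by (simp_all add: block_mat_def)

lemma block_col_carrier[simp]: "block_col x X \<in> carrier_mat total_dim total_dim"
  and block_col_dim[simp]: "dim_row (block_col x X) = total_dim" "dim_col (block_col x X) = total_dim"
  by (simp_all add: block_col_def)

lemma block_mat_index:
  "r < total_dim \<Longrightarrow> s < total_dim \<Longrightarrow> block_mat F $$ (r,s) =
     (if r mod M < d (r div M) \<and> s mod M < d (s div M)
      then F (r div M) (s div M) $$ (r mod M, s mod M) else 0)"
  by (simp add: block_mat_def)

lemma block_index_less: "r < total_dim \<Longrightarrow> r div M < K"
  by (simp add: total_dim_def less_mult_imp_div_less)

lemma block_mat_cong: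
  assumes "\<And>i j. i < K \<Longrightarrow> j < K \<Longrightarrow> F i j = G i j"
  shows "block_mat F = block_mat G"
  by (rule eq_matI) (auto simp: block_mat_index assms block_index_less)

lemma block_mat_zero: "block_mat (\<lambda>i j. 0\<^sub>m (d i) (d j)) = 0\<^sub>m total_dim total_dim"
  by (rule eq_matI) (auto simp: block_mat_index)

lemma block_col_zero:
  assumes "Z = 0\<^sub>m (d y) (d 0)"
  shows "block_col y Z = 0\<^sub>m total_dim total_dim"
proof -
  have "block_col y Z = block_mat (\<lambda>i j. 0\<^sub>m (d i) (d j))"
    unfolding block_col_def using assms by (intro block_mat_cong) auto
  then show ?thesis by (simp add: block_mat_zero)
qed

lemma block_offset_less:
  assumes "j < K" "w < d j"
  shows "j * M + w < total_dim"
proof -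
  have "j * M + w < (j + 1) * M" using assms(2) block_dim_le[of j] by simp
  also have "\<dots> \<le> K * M" using assms(1) by (intro mult_right_mono) auto
  finally show ?thesis by (simp add: total_dim_def)
qed

lemma sum_over_block:
  assumes j: "j < K" and out: "\<And>x. x < total_dim \<Longrightarrow> \<not> (x div M = j \<and> x mod M < d j) \<Longrightarrow> f x = 0"
  shows "(\<Sum>x<total_dim. f x) = (\<Sum>w<d j. f (j * M + w))"
proof -
  have "(\<Sum>x<total_dim. f x) = (\<Sum>x\<in>(\<lambda>w. j * M + w) ` {..<d j}. f x)"
  proof (rule sum.mono_neutral_right)
    show "\<forall>x\<in>{..<total_dim} - (\<lambda>w. j * M + w) ` {..<d j}. f x = 0"
    proof
      fix x assume x: "x \<in> {..<total_dim} - (\<lambda>w. j * M + w) ` {..<d j}"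
      have "x = j * M + x mod M" if "x div M = j" using that by (metis div_mult_mod_eq)
      then show "f x = 0" using x out[of x] by (metis DiffD2 DiffD1 image_eqI lessThan_iff)
    qed
  qed (use block_offset_less[OF j] in auto)
  also have "\<dots> = (\<Sum>w<d j. f (j * M + w))"
    by (subst sum.reindex) (auto simp: inj_on_def)
  finally show ?thesis .
qed

context
  fixes F G :: "nat \<Rightarrow> nat \<Rightarrow> 'a::comm_ring_1 mat"
  assumes F: "\<And>i j. F i j \<in> carrier_mat (d i) (d j)"
    and G: "\<And>i j. G i j \<in> carrier_mat (d i) (d j)"
begin

lemma block_mat_add: "block_mat F + block_mat G = block_mat (\<lambda>i j. F i j + G i j)"
  by (rule eq_matI) (auto simp: block_mat_index carrier_matD[OF F] carrier_matD[OF G])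

lemma block_mat_diff: "block_mat F - block_mat G = block_mat (\<lambda>i j. F i j - G i j)"
  by (rule eq_matI) (auto simp: block_mat_index carrier_matD[OF F] carrier_matD[OF G])

lemma block_mat_mult:
  assumes supp: "\<And>i j. i \<noteq> \<psi> j \<Longrightarrow> G i j = 0\<^sub>m (d i) (d j)"
  shows "block_mat F * block_mat G
    = block_mat (\<lambda>i j. if \<psi> j < K then F i (\<psi> j) * G (\<psi> j) j else 0\<^sub>m (d i) (d j))"
    (is "_ = block_mat ?P")
proof (rule eq_matI)
  fix r s assume "r < dim_row (block_mat ?P)" "s < dim_col (block_mat ?P)"
  then have r: "r < total_dim" and s: "s < total_dim" by (auto simp: block_mat_def)
  define i y l z where "i = r div M" and "y = r mod M" and "l = s div M" and "z = s mod M"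
  define f where "f x = block_mat F $$ (r,x) * block_mat G $$ (x,s)" for x
  have lhs: "(block_mat F * block_mat G) $$ (r,s) = (\<Sum>x<total_dim. f x)"
    using r s by (simp add: scalar_prod_def atLeast0LessThan f_def block_mat_def)
  have f_out: "f x = 0" if "x < total_dim" "x div M \<noteq> \<psi> l" for x
    using that supp[of "x div M" l] r s by (simp add: f_def block_mat_index l_def)
  show "(block_mat F * block_mat G) $$ (r,s) = block_mat ?P $$ (r,s)"
  proof (cases "y < d i \<and> z < d l \<and> \<psi> l < K")
    case True
    define j where "j = \<psi> l"
    have j: "j < K" using True j_def by auto
    have "f x = 0" if "x < total_dim" "\<not> (x div M = j \<and> x mod M < d j)" for x
      using f_out[of x] that r s by (cases "x div M = j") (auto simp: f_def block_mat_index j_def)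
    then have "(\<Sum>x<total_dim. f x) = (\<Sum>w<d j. f (j * M + w))" by (rule sum_over_block[OF j])
    also have "\<dots> = (\<Sum>w<d j. F i j $$ (y,w) * G j l $$ (w,z))"
    proof (rule sum.cong)
      fix w assume "w \<in> {..<d j}"
      then have w: "w < d j" "w < M" using block_dim_le[of j] by auto
      then have "(j * M + w) div M = j" "(j * M + w) mod M = w" by auto
      then show "f (j * M + w) = F i j $$ (y,w) * G j l $$ (w,z)"
        using r s w True block_offset_less[OF j w(1)] by (simp add: f_def block_mat_index i_def y_def l_def z_def)
    qed simp
    also have "\<dots> = (F i j * G j l) $$ (y,z)"
      using F[of i j] G[of j l] True by (simp add: scalar_prod_def atLeast0LessThan)
    finally show ?thesis using lhs r s True by (simp add: block_mat_index j_def i_def y_def l_def z_def)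
  next
    case False
    have "f x = 0" if "x < total_dim" for x
    proof (cases "x div M = \<psi> l")
      case True
      then show ?thesis
        using False that block_index_less[OF that] by (auto simp: f_def block_mat_index r s i_def y_def l_def z_def)
    qed (use f_out that in auto)
    then show ?thesis using lhs False r s by (auto simp: block_mat_index i_def y_def l_def z_def)
  qed
qed (auto simp: block_mat_def)

end

lemma block_mat_mult_block_col:
  assumes F: "\<And>i j. F i j \<in> carrier_mat (d i) (d j)" and X: "X \<in> carrier_mat (d x) (d 0)"
    and x: "x < K" and y: "y < K" and supp: "\<And>i. i \<noteq> y \<Longrightarrow> F i x = 0\<^sub>m (d i) (d x)"
  shows "block_mat F * block_col x X = block_col y (F y x * X)"
proof -
  have "block_mat F * block_col x X
      = block_mat (\<lambda>i j. F i x * (if x = x \<and> j = 0 then X else 0\<^sub>m (d x) (d j)))"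
    unfolding block_col_def using x X
    by (subst block_mat_mult[where \<psi>="\<lambda>_. x"]) (auto simp: F)
  also have "\<dots> = block_col y (F y x * X)"
    unfolding block_col_def using F[of _ x] X supp by (intro block_mat_cong) (auto simp: right_mult_zero_mat[OF F])
  finally show ?thesis .
qed

end

section \<open>The shift operators of a point of Lambda\<close>

locale lambda_point =
  fixes n k :: nat and v :: "nat \<Rightarrow> nat" and B :: "nat \<Rightarrow> nat \<Rightarrow> complex mat"
    and \<Gamma> \<Delta> :: "nat \<Rightarrow> complex mat"
  assumes k_pos: "1 \<le> k" and k_less: "k < n"
    and point: "Lambda_A n v (\<lambda>i. if i = k \<or> i = 2*n-k then 1 else 0) B \<Gamma> \<Delta>"
begin

definition k' :: nat where "k' = 2*n - k"

lemma k'_bounds: "n < k'" "k' < 2*n" "k < k'" "k + k' = 2*n"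
  using k_pos k_less by (auto simp: k'_def)

definition dims :: "nat \<Rightarrow> nat" where
  "dims i = (if i = 0 then 1 else if i \<le> 2*n-1 then v i else 0)"

definition block_size :: nat where "block_size = Suc (\<Sum>i<2*n. v i)"

lemma dims_0[simp]: "dims 0 = 1" and dims_inner[simp]: "1 \<le> i \<Longrightarrow> i \<le> 2*n-1 \<Longrightarrow> dims i = v i"
  by (simp_all add: dims_def)

sublocale block_layout dims "2*n" block_size
proof
  show "dims i \<le> block_size" for i
  proof (cases "1 \<le> i \<and> i \<le> 2*n-1")
    case True
    then have "v i \<le> (\<Sum>i<2*n. v i)" by (intro member_le_sum) auto
    then show ?thesis using True by (simp add: block_size_def)
  qed (auto simp: dims_def block_size_def)
qed (simp add: block_size_def)

lemma B_carrier:
  "1 \<le> i \<Longrightarrow> i < 2*n-1 \<Longrightarrow> B i (i+1) \<in> carrier_mat (v i) (v (i+1)) \<and> B (i+1) i \<in> carrier_mat (v (i+1)) (v i)"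
  using point unfolding Lambda_A_def by blast

lemma Gamma_Delta_carrier:
  assumes "1 \<le> i" "i \<le> 2*n-1"
  shows "\<Gamma> i \<in> carrier_mat (v i) (if i \<in> {k, k'} then 1 else 0)"
    and "\<Delta> i \<in> carrier_mat (if i \<in> {k, k'} then 1 else 0) (v i)"
  using point assms unfolding Lambda_A_def k'_def by auto

lemma framing_bounds: "a \<in> {k, k'} \<Longrightarrow> 1 \<le> a \<and> a \<le> 2*n-1"
  using k'_bounds k_pos by auto

lemma Gamma_carrier: "b \<in> {k, k'} \<Longrightarrow> \<Gamma> b \<in> carrier_mat (v b) 1"
  using Gamma_Delta_carrier(1)[of b] framing_bounds[of b] by (simp only: if_True)

lemma Delta_carrier: "a \<in> {k, k'} \<Longrightarrow> \<Delta> a \<in> carrier_mat 1 (v a)"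
  using Gamma_Delta_carrier(2)[of a] framing_bounds[of a] by (simp only: if_True)

(* With these signs, down * up - up * down is block diagonal with the left-hand sides of the
   three families of equations of Lambda_A as diagonal blocks. *)
definition sign :: "nat \<Rightarrow> complex" where "sign j = (if n \<le> j then -1 else 1)"

definition down_block :: "nat \<Rightarrow> nat \<Rightarrow> complex mat" where
  "down_block i j = (if j = i+1 \<and> 1 \<le> i \<and> j \<le> 2*n-1 then B i j else 0\<^sub>m (dims i) (dims j))"

definition up_block :: "nat \<Rightarrow> nat \<Rightarrow> complex mat" where
  "up_block i j = (if i = j+1 \<and> 1 \<le> j \<and> i \<le> 2*n-1 then sign j \<cdot>\<^sub>m B i j else 0\<^sub>m (dims i) (dims j))"

definition delta_block :: "nat \<Rightarrow> nat \<Rightarrow> nat \<Rightarrow> complex mat" where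
  "delta_block a i j = (if i = 0 \<and> j = a then \<Delta> a else 0\<^sub>m (dims i) (dims j))"

definition down :: "complex mat" where "down = block_mat down_block"
definition up :: "complex mat" where "up = block_mat up_block"
definition gamma :: "nat \<Rightarrow> complex mat" where "gamma b = block_col b (\<Gamma> b)"
definition delta :: "nat \<Rightarrow> complex mat" where "delta a = block_mat (delta_block a)"

lemma down_block_carrier[simp]: "down_block i j \<in> carrier_mat (dims i) (dims j)"
  using B_carrier[of i] by (auto simp: down_block_def)

lemma up_block_carrier[simp]: "up_block i j \<in> carrier_mat (dims i) (dims j)"
  using B_carrier[of j] by (auto simp: up_block_def)

lemma delta_block_carrier: "a \<in> {k, k'} \<Longrightarrow> delta_block a i j \<in> carrier_mat (dims i) (dims j)"
  using Delta_carrier framing_bounds by (auto simp: delta_block_def)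

lemma Gamma_dims: "b \<in> {k, k'} \<Longrightarrow> \<Gamma> b \<in> carrier_mat (dims b) (dims 0)"
  using Gamma_carrier framing_bounds by auto

lemma gamma_block_carrier:
  "b \<in> {k, k'} \<Longrightarrow> (if i = b \<and> j = 0 then \<Gamma> b else 0\<^sub>m (dims i) (dims j)) \<in> carrier_mat (dims i) (dims j)"
  using Gamma_dims by auto

lemma down_carrier[simp]: "down \<in> carrier_mat total_dim total_dim"
  and up_carrier[simp]: "up \<in> carrier_mat total_dim total_dim"
  and gamma_carrier[simp]: "gamma b \<in> carrier_mat total_dim total_dim"
  and delta_carrier[simp]: "delta a \<in> carrier_mat total_dim total_dim"
  by (simp_all add: down_def up_def gamma_def delta_def)

lemma operator_dims[simp]:
  "dim_row down = total_dim" "dim_col down = total_dim" "dim_row up = total_dim" "dim_col up = total_dim"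
  "dim_row (gamma b) = total_dim" "dim_col (gamma b) = total_dim"
  "dim_row (delta a) = total_dim" "dim_col (delta a) = total_dim"
  by (simp_all add: down_def up_def gamma_def delta_def block_col_def)

lemma block_dims[simp]:
  "dim_row (down_block i j) = dims i" "dim_col (down_block i j) = dims j"
  "dim_row (up_block i j) = dims i" "dim_col (up_block i j) = dims j"
  using carrier_matD[OF down_block_carrier[of i j]] carrier_matD[OF up_block_carrier[of i j]] by auto

lemma Bz_carrier: "j = i+1 \<or> i = j+1 \<Longrightarrow> Bz n v B i j \<in> carrier_mat (v i) (v j)"
  using B_carrier[of i] B_carrier[of j] by (auto simp: Bz_def)

lemma diagonal_relation:
  assumes i: "1 \<le> i" "i \<le> 2*n-1"
  shows "sign i \<cdot>\<^sub>m (Bz n v B i (i+1) * Bz n v B (i+1) i) - sign (i-1) \<cdot>\<^sub>m (Bz n v B i (i-1) * Bz n v B (i-1) i)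
    = \<Gamma> i * \<Delta> i"
proof -
  define Y X where "Y = Bz n v B i (i+1) * Bz n v B (i+1) i" and "X = Bz n v B i (i-1) * Bz n v B (i-1) i"
  have Y: "Y \<in> carrier_mat (v i) (v i)" and X: "X \<in> carrier_mat (v i) (v i)"
    unfolding Y_def X_def using Bz_carrier[of "i+1" i] Bz_carrier[of i "i+1"] Bz_carrier[of "i-1" i]
      Bz_carrier[of i "i-1"] i by auto
  consider "i < n" | "i = n" | "n < i" by linarith
  then have "sign i \<cdot>\<^sub>m Y - sign (i-1) \<cdot>\<^sub>m X = \<Gamma> i * \<Delta> i"
  proof cases
    case 1
    then have "sign i \<cdot>\<^sub>m Y - sign (i-1) \<cdot>\<^sub>m X = Y - X"
      using X Y by (intro eq_matI) (auto simp: sign_def)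
    also have "\<dots> = \<Gamma> i * \<Delta> i" using point i 1 unfolding Lambda_A_def X_def Y_def by auto
    finally show ?thesis .
  next
    case 2
    then have "sign i \<cdot>\<^sub>m Y - sign (i-1) \<cdot>\<^sub>m X = - X - Y"
      using X Y k_pos k_less by (intro eq_matI) (auto simp: sign_def)
    also have "\<dots> = \<Gamma> i * \<Delta> i" using point 2 unfolding Lambda_A_def X_def Y_def by auto
    finally show ?thesis .
  next
    case 3
    then have "sign i \<cdot>\<^sub>m Y - sign (i-1) \<cdot>\<^sub>m X = X - Y"
      using X Y by (intro eq_matI) (auto simp: sign_def)
    also have "\<dots> = \<Gamma> i * \<Delta> i" using point i 3 unfolding Lambda_A_def X_def Y_def by auto
    finally show ?thesis .
  qed
  then show ?thesis unfolding X_def Y_def .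
qed

definition down_up_block :: "nat \<Rightarrow> nat \<Rightarrow> complex mat" where
  "down_up_block i j = (if Suc j < 2*n then down_block i (Suc j) * up_block (Suc j) j else 0\<^sub>m (dims i) (dims j))"

definition up_down_block :: "nat \<Rightarrow> nat \<Rightarrow> complex mat" where
  "up_down_block i j = (if j - 1 < 2*n then up_block i (j - 1) * down_block (j - 1) j else 0\<^sub>m (dims i) (dims j))"

definition framing_block :: "nat \<Rightarrow> nat \<Rightarrow> nat \<Rightarrow> complex mat" where
  "framing_block b i j = (if i = b then \<Gamma> b else 0\<^sub>m (dims i) (dims 0)) * delta_block b 0 j"

lemma product_block_carrier:
  "down_up_block i j \<in> carrier_mat (dims i) (dims j)" "up_down_block i j \<in> carrier_mat (dims i) (dims j)"
  "b \<in> {k, k'} \<Longrightarrow> framing_block b i j \<in> carrier_mat (dims i) (dims j)"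
proof -
  show "down_up_block i j \<in> carrier_mat (dims i) (dims j)" "up_down_block i j \<in> carrier_mat (dims i) (dims j)"
    by (auto simp: down_up_block_def up_down_block_def)
  assume b: "b \<in> {k, k'}"
  have "(if i = b then \<Gamma> b else 0\<^sub>m (dims i) (dims 0)) \<in> carrier_mat (dims i) (dims 0)"
    using Gamma_dims[OF b] by auto
  then show "framing_block b i j \<in> carrier_mat (dims i) (dims j)"
    unfolding framing_block_def using delta_block_carrier[OF b] by (rule mult_carrier_mat)
qed

lemma down_mult_up: "down * up = block_mat down_up_block"
  unfolding down_def up_def down_up_block_def[abs_def]
  by (rule block_mat_mult[OF down_block_carrier up_block_carrier]) (auto simp: up_block_def)

lemma up_mult_down: "up * down = block_mat up_down_block"
  unfolding down_def up_def up_down_block_def[abs_def]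
  by (rule block_mat_mult[OF up_block_carrier down_block_carrier, where \<psi>="\<lambda>j. j - 1"])
    (auto simp: down_block_def)

lemma gamma_mult_delta: "b \<in> {k, k'} \<Longrightarrow> gamma b * delta b = block_mat (framing_block b)"
  unfolding gamma_def block_col_def delta_def framing_block_def[abs_def]
  using block_mat_mult[where \<psi>="\<lambda>_. 0", OF gamma_block_carrier delta_block_carrier] k_less
  by (simp add: delta_block_def[abs_def])

lemma down_up_diagonal_block:
  assumes "1 \<le> i" "i \<le> 2*n-1"
  shows "down_up_block i i = sign i \<cdot>\<^sub>m (Bz n v B i (i+1) * Bz n v B (i+1) i)"
proof (cases "Suc i < 2*n")
  case True
  then have "B i (i+1) \<in> carrier_mat (v i) (v (i+1))" "B (i+1) i \<in> carrier_mat (v (i+1)) (v i)"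
    using assms B_carrier[of i] by auto
  then show ?thesis
    using assms True by (simp add: down_up_block_def down_block_def up_block_def Bz_def mult_smult_distrib)
qed (use assms in \<open>auto simp: down_up_block_def Bz_def\<close>)

lemma up_down_diagonal_block:
  assumes "1 \<le> i" "i \<le> 2*n-1"
  shows "up_down_block i i = sign (i-1) \<cdot>\<^sub>m (Bz n v B i (i-1) * Bz n v B (i-1) i)"
proof (cases "2 \<le> i")
  case True
  then have "B i (i-1) \<in> carrier_mat (v i) (v (i-1))" "B (i-1) i \<in> carrier_mat (v (i-1)) (v i)"
    using assms B_carrier[of "i-1"] by auto
  then show ?thesis
    using assms True by (simp add: up_down_block_def down_block_def up_block_def Bz_def mult_smult_assoc_mat)
qed (use assms in \<open>auto simp: up_down_block_def Bz_def up_block_def\<close>)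

lemma framing_diagonal_block:
  assumes "1 \<le> i" "i \<le> 2*n-1"
  shows "framing_block k i i + framing_block k' i i = \<Gamma> i * \<Delta> i"
proof -
  have "k \<noteq> k'" using k'_bounds by simp
  moreover have "\<Gamma> i * \<Delta> i = 0\<^sub>m (v i) (v i)" if "i \<notin> {k, k'}"
    using Gamma_Delta_carrier[OF assms] that by (intro eq_matI) (auto simp: scalar_prod_def)
  ultimately show ?thesis
    using assms Gamma_Delta_carrier[OF assms] by (auto simp: framing_block_def delta_block_def intro!: eq_matI)
qed

lemma off_diagonal_blocks_zero:
  assumes "\<not> (i = j \<and> 1 \<le> i)"
  shows "down_up_block i j = 0\<^sub>m (dims i) (dims j)" "up_down_block i j = 0\<^sub>m (dims i) (dims j)"
    and "b \<in> {k, k'} \<Longrightarrow> framing_block b i j = 0\<^sub>m (dims i) (dims j)"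
proof -
  have "down_block i (Suc j) = 0\<^sub>m (dims i) (dims (Suc j))" "up_block i (j - 1) = 0\<^sub>m (dims i) (dims (j - 1))"
    using assms by (auto simp: down_block_def up_block_def)
  then show "down_up_block i j = 0\<^sub>m (dims i) (dims j)" "up_down_block i j = 0\<^sub>m (dims i) (dims j)"
    by (simp_all add: down_up_block_def up_down_block_def)
  assume b: "b \<in> {k, k'}"
  show "framing_block b i j = 0\<^sub>m (dims i) (dims j)"
  proof (cases "i = b")
    case True
    then have "delta_block b 0 j = 0\<^sub>m (dims 0) (dims j)"
      using assms framing_bounds[OF b] by (auto simp: delta_block_def)
    then show ?thesis using True Gamma_dims[OF b] by (simp add: framing_block_def)
  next
    case False
    then show ?thesis using delta_block_carrier[OF b, of 0 j] by (simp add: framing_block_def)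
  qed
qed

lemma commutator_down_up: "down * up - up * down = gamma k * delta k + gamma k' * delta k'"
proof -
  have "block_mat (\<lambda>i j. down_up_block i j - up_down_block i j)
      = block_mat (\<lambda>i j. framing_block k i j + framing_block k' i j)"
  proof (rule block_mat_cong)
    fix i j assume "i < 2*n" "j < 2*n"
    show "down_up_block i j - up_down_block i j = framing_block k i j + framing_block k' i j"
    proof (cases "i = j \<and> 1 \<le> i")
      case True
      then have i: "1 \<le> i" "i \<le> 2*n-1" and "j = i" using \<open>i < 2*n\<close> by auto
      show ?thesis
        unfolding \<open>j = i\<close> down_up_diagonal_block[OF i] up_down_diagonal_block[OF i]
          framing_diagonal_block[OF i] by (rule diagonal_relation[OF i])
    qed (simp add: off_diagonal_blocks_zero)
  qed
  then show ?thesis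
    by (simp add: down_mult_up up_mult_down gamma_mult_delta block_mat_diff block_mat_add product_block_carrier)
qed

lemma down_mult_block_col:
  assumes x: "x < 2*n" and X: "X \<in> carrier_mat (dims x) (dims 0)"
  shows "down * block_col x X = (if 2 \<le> x then block_col (x-1) (B (x-1) x * X) else 0\<^sub>m total_dim total_dim)"
proof -
  have "down * block_col x X = block_col (x-1) (down_block (x-1) x * X)"
    unfolding down_def using x X
    by (intro block_mat_mult_block_col[OF down_block_carrier]) (auto simp: down_block_def)
  then show ?thesis using x X by (auto simp: down_block_def block_col_zero)
qed

lemma up_mult_block_col:
  assumes x: "x < 2*n" and X: "X \<in> carrier_mat (dims x) (dims 0)"
  shows "up * block_col x X
    = (if 1 \<le> x \<and> Suc x \<le> 2*n-1 then block_col (Suc x) (sign x \<cdot>\<^sub>m (B (Suc x) x * X)) else 0\<^sub>m total_dim total_dim)"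
proof (cases "1 \<le> x \<and> Suc x \<le> 2*n-1")
  case True
  have "up * block_col x X = block_col (Suc x) (up_block (Suc x) x * X)"
    unfolding up_def using True X
    by (intro block_mat_mult_block_col[OF up_block_carrier]) (auto simp: up_block_def)
  moreover have "B (Suc x) x \<in> carrier_mat (v (Suc x)) (v x)" using B_carrier[of x] True by auto
  ultimately show ?thesis using True X by (simp add: up_block_def mult_smult_assoc_mat)
next
  case False
  have "up * block_col x X = block_col 0 (up_block 0 x * X)"
    unfolding up_def using False X x
    by (intro block_mat_mult_block_col[OF up_block_carrier]) (auto simp: up_block_def)
  then show ?thesis using False X by (auto simp: up_block_def block_col_zero)
qed

lemma delta_mult_block_col:
  assumes a: "a \<in> {k, k'}" and x: "x < 2*n" and X: "X \<in> carrier_mat (dims x) (dims 0)"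
  shows "delta a * block_col x X = (if x = a then block_col 0 (\<Delta> a * X) else 0\<^sub>m total_dim total_dim)"
proof -
  have "delta a * block_col x X = block_col 0 (delta_block a 0 x * X)"
    unfolding delta_def using a x X
    by (intro block_mat_mult_block_col delta_block_carrier) (auto simp: delta_block_def)
  then show ?thesis using X by (auto simp: delta_block_def block_col_zero)
qed

lemma mono_path_carrier:
  assumes "1 \<le> q" "q \<le> 2*n-1" "1 \<le> r" "r \<le> 2*n-1"
  shows "mono_path B v q r \<in> carrier_mat (v q) (v r)"
  using assms
proof (induction "if q < r then r - q else q - r" arbitrary: q)
  case 0
  then show ?case by (simp add: mono_path.simps[of B v q r] split: if_splits)
next
  case (Suc d)
  show ?case
  proof (cases "q < r")
    case True
    then have "mono_path B v (q+1) r \<in> carrier_mat (v (q+1)) (v r)" using Suc by (intro Suc.hyps) auto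
    moreover have "B q (q+1) \<in> carrier_mat (v q) (v (q+1))" using B_carrier[of q] Suc.prems True by auto
    ultimately show ?thesis using True by (simp add: mono_path.simps[of B v q r])
  next
    case False
    then have "mono_path B v (q-1) r \<in> carrier_mat (v (q-1)) (v r)" using Suc by (intro Suc.hyps) auto
    moreover have "B q (q-1) \<in> carrier_mat (v q) (v (q-1))"
      using B_carrier[of "q-1"] Suc False by (cases q) auto
    ultimately show ?thesis using False Suc by (simp add: mono_path.simps[of B v q r])
  qed
qed

lemma down_mult_path_block_col:
  assumes y: "1 \<le> y" "y \<le> x" "x \<le> 2*n-1" and X: "X \<in> carrier_mat (v x) 1"
  shows "down * block_col y (mono_path B v y x * X)
    = (if 2 \<le> y then block_col (y-1) (mono_path B v (y-1) x * X) else 0\<^sub>m total_dim total_dim)"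
proof -
  have P: "mono_path B v y x \<in> carrier_mat (v y) (v x)" using y by (intro mono_path_carrier) auto
  have "down * block_col y (mono_path B v y x * X)
      = (if 2 \<le> y then block_col (y-1) (B (y-1) y * (mono_path B v y x * X)) else 0\<^sub>m total_dim total_dim)"
    using y P X by (intro down_mult_block_col) auto
  moreover have "B (y-1) y * (mono_path B v y x * X) = mono_path B v (y-1) x * X" if "2 \<le> y"
  proof -
    have By: "B (y-1) y \<in> carrier_mat (v (y-1)) (v y)" using B_carrier[of "y-1"] that y by auto
    have "y - 1 < x" "Suc (y - 1) = y" using that y by auto
    then have "mono_path B v (y-1) x = B (y-1) y * mono_path B v y x"
      by (subst mono_path.simps[of B v "y-1" x]) simp
    then show ?thesis using assoc_mult_mat[OF By P X] by simp
  qed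
  ultimately show ?thesis by simp
qed

lemma down_pow_block_col:
  assumes x: "1 \<le> x" "x \<le> 2*n-1" and X: "X \<in> carrier_mat (v x) 1"
  shows "down ^\<^sub>m q * block_col x X
    = (if q < x then block_col (x-q) (mono_path B v (x-q) x * X) else 0\<^sub>m total_dim total_dim)"
proof (induction q)
  case 0
  then show ?case using x X by (simp add: mono_path.simps[of B v x x])
next
  case (Suc q)
  have "down ^\<^sub>m Suc q * block_col x X = down * (down ^\<^sub>m q * block_col x X)"
    by (simp add: pow_mat_Suc_left[OF down_carrier] assoc_mult_mat[of _ total_dim total_dim _ total_dim _ total_dim]
        del: pow_mat.simps)
  then show ?case
    using Suc x X down_mult_path_block_col[of "x-q" x X] by (cases "q < x") (auto simp: Suc_diff_Suc)
qed

(* The number of steps j -> j+1 with n \<le> j on the way from block x to block x + p,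
   i.e. of signs -1 picked up by up ^ p. *)
definition flips :: "nat \<Rightarrow> nat \<Rightarrow> nat" where "flips x p = x + p - max x n"

lemma up_mult_path_block_col:
  assumes y: "1 \<le> x" "x \<le> y" "y \<le> 2*n-1" and X: "X \<in> carrier_mat (v x) 1"
  shows "up * block_col y (c \<cdot>\<^sub>m (mono_path B v y x * X)) = (if Suc y \<le> 2*n-1
    then block_col (Suc y) ((sign y * c) \<cdot>\<^sub>m (mono_path B v (Suc y) x * X)) else 0\<^sub>m total_dim total_dim)"
proof -
  have P: "mono_path B v y x \<in> carrier_mat (v y) (v x)" using y by (intro mono_path_carrier) auto
  then have PX: "mono_path B v y x * X \<in> carrier_mat (v y) 1" using X by simp
  have "up * block_col y (c \<cdot>\<^sub>m (mono_path B v y x * X)) = (if 1 \<le> y \<and> Suc y \<le> 2*n-1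
      then block_col (Suc y) (sign y \<cdot>\<^sub>m (B (Suc y) y * (c \<cdot>\<^sub>m (mono_path B v y x * X))))
      else 0\<^sub>m total_dim total_dim)"
    using y PX by (intro up_mult_block_col) auto
  moreover have "sign y \<cdot>\<^sub>m (B (Suc y) y * (c \<cdot>\<^sub>m (mono_path B v y x * X)))
      = (sign y * c) \<cdot>\<^sub>m (mono_path B v (Suc y) x * X)" if "Suc y \<le> 2*n-1"
  proof -
    have By: "B (Suc y) y \<in> carrier_mat (v (Suc y)) (v y)" using B_carrier[of y] that y by auto
    have "mono_path B v (Suc y) x = B (Suc y) y * mono_path B v y x"
      using y by (subst mono_path.simps) simp
    then show ?thesis using assoc_mult_mat[OF By P X] by (simp add: mult_smult_distrib[OF By PX] smult_smult_mat)
  qed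
  ultimately show ?thesis using y by simp
qed

lemma up_pow_block_col:
  assumes x: "1 \<le> x" "x \<le> 2*n-1" and X: "X \<in> carrier_mat (v x) 1"
  shows "up ^\<^sub>m p * block_col x X = (if x + p \<le> 2*n-1
    then block_col (x+p) ((-1)^(flips x p) \<cdot>\<^sub>m (mono_path B v (x+p) x * X)) else 0\<^sub>m total_dim total_dim)"
proof (induction p)
  case 0
  then show ?case using x X by (simp add: mono_path.simps[of B v x x] flips_def)
next
  case (Suc p)
  have "up ^\<^sub>m Suc p * block_col x X = up * (up ^\<^sub>m p * block_col x X)"
    by (simp add: pow_mat_Suc_left[OF up_carrier] assoc_mult_mat[of _ total_dim total_dim _ total_dim _ total_dim]
        del: pow_mat.simps)
  moreover have "sign (x + p) * (-1)^(flips x p) = (-1)^(flips x (Suc p))"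
    by (cases "n \<le> x + p") (auto simp: sign_def flips_def max_def Suc_diff_le)
  ultimately show ?case
    using Suc x X up_mult_path_block_col[of x "x+p" X "(-1)^(flips x p)"] by (cases "x + p \<le> 2*n-1") auto
qed

lemma total_dim_ge: "2*n \<le> total_dim"
  using block_size_pos by (simp add: total_dim_def)

lemma total_dim_pos: "0 < total_dim"
  using total_dim_ge k_less by simp

lemma block_col_entry_0: "block_col 0 Z $$ (0,0) = Z $$ (0,0)"
  using total_dim_pos block_size_pos by (simp add: block_col_def block_mat_index)

lemma block_col_nonzero_col:
  assumes "r < total_dim" "s < total_dim" "s \<noteq> 0"
  shows "block_col x X $$ (r,s) = 0"
proof -
  have "s div block_size \<noteq> 0 \<or> \<not> s mod block_size < dims (s div block_size)"
    using assms(3) by (metis div_mult_mod_eq dims_0 less_one mult_zero_left add_0)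
  then show ?thesis using assms by (auto simp: block_col_def block_mat_index)
qed

definition pairing :: "nat \<Rightarrow> nat \<Rightarrow> complex mat \<Rightarrow> complex" where
  "pairing a b Z = (delta a * Z * gamma b) $$ (0,0)"

definition path_value :: "nat \<Rightarrow> nat \<Rightarrow> nat \<Rightarrow> complex" where
  "path_value a q b = (\<Delta> a * path3 B v a q b * \<Gamma> b) $$ (0,0)"

lemma pairing_add:
  "Z \<in> carrier_mat total_dim total_dim \<Longrightarrow> Z' \<in> carrier_mat total_dim total_dim
    \<Longrightarrow> pairing a b (Z + Z') = pairing a b Z + pairing a b Z'"
  using total_dim_pos
  by (simp add: pairing_def mult_add_distrib_mat[of _ total_dim total_dim _ total_dim]
      add_mult_distrib_mat[of _ total_dim total_dim _ _ total_dim] mult_carrier_mat[of _ total_dim total_dim])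

lemma pairing_diff:
  "Z \<in> carrier_mat total_dim total_dim \<Longrightarrow> Z' \<in> carrier_mat total_dim total_dim
    \<Longrightarrow> pairing a b (Z - Z') = pairing a b Z - pairing a b Z'"
  using total_dim_pos
  by (simp add: pairing_def mult_minus_distrib_mat[of _ total_dim total_dim _ total_dim]
      minus_mult_distrib_mat[of _ total_dim total_dim _ _ total_dim] mult_carrier_mat[of _ total_dim total_dim])

lemma pairing_smult: "Z \<in> carrier_mat total_dim total_dim \<Longrightarrow> pairing a b (c \<cdot>\<^sub>m Z) = c * pairing a b Z"
  using total_dim_pos
  by (simp add: pairing_def mult_smult_distrib[of _ total_dim total_dim _ total_dim]
      mult_smult_assoc_mat[of _ total_dim total_dim _ total_dim])

lemma pairing_mat_sum:
  "(\<And>i. f i \<in> carrier_mat total_dim total_dim) \<Longrightarrow> pairing a b (mat_sum total_dim f m) = (\<Sum>i<m. pairing a b (f i))"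
proof (induction m)
  case (Suc m)
  then show ?case by (simp add: pairing_add)
qed (use total_dim_pos in \<open>simp add: pairing_def\<close>)

(* Since gamma c has a single nonzero column, the entry (0,0) of a product through gamma c * delta c factorises. *)
lemma pairing_through_framing:
  assumes T: "T \<in> carrier_mat total_dim total_dim" and S: "S \<in> carrier_mat total_dim total_dim"
  shows "pairing a b (T * (gamma c * delta c) * S) = pairing a c T * pairing c b S"
proof -
  define U V where "U = delta a * T * gamma c" and "V = delta c * S * gamma b"
  have U: "U \<in> carrier_mat total_dim total_dim" and V: "V \<in> carrier_mat total_dim total_dim"
    using T S by (auto simp: U_def V_def)
  have U_row: "U $$ (0,x) = 0" if "x < total_dim" "x \<noteq> 0" for x
    using that total_dim_pos T block_col_nonzero_col[of _ x c "\<Gamma> c"]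
    by (simp add: U_def gamma_def scalar_prod_def)
  have "delta a * (T * (gamma c * delta c) * S) * gamma b = U * V"
    using T S by (simp add: U_def V_def assoc_mult_mat[of _ total_dim total_dim _ total_dim _ total_dim]
        mult_carrier_mat[of _ total_dim total_dim])
  then have "pairing a b (T * (gamma c * delta c) * S) = (\<Sum>x\<in>{0..<total_dim}. U $$ (0,x) * V $$ (x,0))"
    using U V total_dim_pos by (simp add: pairing_def scalar_prod_def)
  also have "\<dots> = (\<Sum>x\<in>{0}. U $$ (0,x) * V $$ (x,0))"
    by (rule sum.mono_neutral_right) (use total_dim_pos U_row in auto)
  finally show ?thesis by (simp add: pairing_def U_def V_def)
qed

lemma delta_block_col_entry:
  assumes a: "a \<in> {k, k'}" and y: "1 \<le> y" "y \<le> 2*n-1" and Z: "Z \<in> carrier_mat (v y) 1"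
  shows "(delta a * block_col y Z) $$ (0,0) = (if y = a then (\<Delta> a * Z) $$ (0,0) else 0)"
  using delta_mult_block_col[OF a, of y Z] y Z total_dim_pos by (simp add: block_col_entry_0)

lemma path_value_eq:
  assumes a: "a \<in> {k, k'}" and b: "b \<in> {k, k'}" and q: "1 \<le> q" "q \<le> 2*n-1"
  shows "(\<Delta> a * (c \<cdot>\<^sub>m (mono_path B v a q * (mono_path B v q b * \<Gamma> b)))) $$ (0,0) = c * path_value a q b"
proof -
  have "mono_path B v a q \<in> carrier_mat (v a) (v q)" "mono_path B v q b \<in> carrier_mat (v q) (v b)"
    using framing_bounds[OF a] framing_bounds[OF b] q by (auto intro!: mono_path_carrier)
  then show ?thesis
    unfolding path_value_def path3_def by (rule entry_smult_mult_assoc[OF Delta_carrier[OF a] _ _ Gamma_carrier[OF b]])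
qed

lemma up_down_gamma:
  assumes b: "b \<in> {k, k'}"
  shows "up ^\<^sub>m p * (down ^\<^sub>m q * gamma b) = (if q < b \<and> b - q + p \<le> 2*n-1
    then block_col (b-q+p) ((-1)^(flips (b-q) p) \<cdot>\<^sub>m (mono_path B v (b-q+p) (b-q) * (mono_path B v (b-q) b * \<Gamma> b)))
    else 0\<^sub>m total_dim total_dim)"
proof (cases "q < b")
  case True
  have "mono_path B v (b-q) b * \<Gamma> b \<in> carrier_mat (v (b-q)) 1"
    using True framing_bounds[OF b] by (intro mult_carrier_mat[OF mono_path_carrier Gamma_carrier[OF b]]) auto
  then show ?thesis
    using True framing_bounds[OF b] Gamma_carrier[OF b] by (simp add: gamma_def down_pow_block_col up_pow_block_col)
qed (use framing_bounds[OF b] Gamma_carrier[OF b] in \<open>simp add: gamma_def down_pow_block_col\<close>)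

lemma down_up_gamma:
  assumes b: "b \<in> {k, k'}"
  shows "down ^\<^sub>m q * (up ^\<^sub>m p * gamma b) = (if b + p \<le> 2*n-1 \<and> q < b + p
    then block_col (b+p-q) ((-1)^(flips b p) \<cdot>\<^sub>m (mono_path B v (b+p-q) (b+p) * (mono_path B v (b+p) b * \<Gamma> b)))
    else 0\<^sub>m total_dim total_dim)"
proof (cases "b + p \<le> 2*n-1")
  case True
  have P: "mono_path B v (b+p) b * \<Gamma> b \<in> carrier_mat (v (b+p)) 1"
    using True framing_bounds[OF b] by (intro mult_carrier_mat[OF mono_path_carrier Gamma_carrier[OF b]]) auto
  have "mono_path B v (b+p-q) (b+p) * ((-1)^(flips b p) \<cdot>\<^sub>m (mono_path B v (b+p) b * \<Gamma> b))
      = (-1)^(flips b p) \<cdot>\<^sub>m (mono_path B v (b+p-q) (b+p) * (mono_path B v (b+p) b * \<Gamma> b))" if "q < b + p"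
    using that True by (intro mult_smult_distrib[OF mono_path_carrier P]) auto
  then show ?thesis
    using True framing_bounds[OF b] Gamma_carrier[OF b] P by (simp add: gamma_def down_pow_block_col up_pow_block_col)
qed (use framing_bounds[OF b] Gamma_carrier[OF b] total_dim_pos in \<open>simp add: gamma_def up_pow_block_col\<close>)

lemma pairing_eq_delta_word_gamma:
  "X \<in> carrier_mat total_dim total_dim \<Longrightarrow> Y \<in> carrier_mat total_dim total_dim
    \<Longrightarrow> pairing a b (X * Y) = (delta a * (X * (Y * gamma b))) $$ (0,0)"
  by (simp add: pairing_def assoc_mult_mat[of _ total_dim total_dim _ total_dim _ total_dim]
      mult_carrier_mat[of _ total_dim total_dim])

lemma pairing_up_down:
  assumes a: "a \<in> {k, k'}" and b: "b \<in> {k, k'}"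
  shows "pairing a b (up ^\<^sub>m p * down ^\<^sub>m q)
    = (if q < b \<and> b - q + p = a then (-1)^(flips (b-q) p) * path_value a (b-q) b else 0)"
proof (cases "q < b \<and> b - q + p \<le> 2*n-1")
  case True
  then have "mono_path B v (b-q+p) (b-q) * (mono_path B v (b-q) b * \<Gamma> b) \<in> carrier_mat (v (b-q+p)) 1"
    using framing_bounds[OF b] Gamma_carrier[OF b] by (auto intro!: mult_carrier_mat mono_path_carrier)
  then show ?thesis
    using True framing_bounds[OF b] delta_block_col_entry[OF a, of "b-q+p"] path_value_eq[OF a b, of "b-q"]
    by (auto simp: pairing_eq_delta_word_gamma up_down_gamma[OF b])
qed (use framing_bounds[OF a] total_dim_pos in \<open>auto simp: pairing_eq_delta_word_gamma up_down_gamma[OF b]\<close>)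

lemma pairing_down_up:
  assumes a: "a \<in> {k, k'}" and b: "b \<in> {k, k'}"
  shows "pairing a b (down ^\<^sub>m q * up ^\<^sub>m p) = (if b + p \<le> 2*n-1 \<and> q < b + p \<and> b + p - q = a
    then (-1)^(flips b p) * path_value a (b+p) b else 0)"
proof (cases "b + p \<le> 2*n-1 \<and> q < b + p")
  case True
  then have "mono_path B v (b+p-q) (b+p) * (mono_path B v (b+p) b * \<Gamma> b) \<in> carrier_mat (v (b+p-q)) 1"
    using framing_bounds[OF b] Gamma_carrier[OF b] by (auto intro!: mult_carrier_mat mono_path_carrier)
  then show ?thesis
    using True framing_bounds[OF b] delta_block_col_entry[OF a, of "b+p-q"] path_value_eq[OF a b, of "b+p"]
    by (auto simp: pairing_eq_delta_word_gamma down_up_gamma[OF b])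
qed (use total_dim_pos in \<open>auto simp: pairing_eq_delta_word_gamma down_up_gamma[OF b]\<close>)

subsection \<open>Generating functions\<close>

lemma down_nilpotent: "down ^\<^sub>m total_dim = 0\<^sub>m total_dim total_dim"
proof (rule pow_mat_eq_zero_if_weight_increasing[OF down_carrier, where w="\<lambda>r. r div block_size"])
  fix r s assume "r < total_dim" "s < total_dim" "down $$ (r,s) \<noteq> 0"
  then show "r div block_size < s div block_size"
    by (auto simp: down_def block_mat_index down_block_def split: if_splits)
qed (meson div_le_dividend le_less_trans)

lemma up_nilpotent: "up ^\<^sub>m total_dim = 0\<^sub>m total_dim total_dim"
proof (rule pow_mat_eq_zero_if_weight_increasing[OF up_carrier, where w="\<lambda>r. total_dim - 1 - r div block_size"])
  fix r s assume rs: "r < total_dim" "s < total_dim" and "up $$ (r,s) \<noteq> 0"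
  then have "r div block_size = s div block_size + 1"
    by (auto simp: up_def block_mat_index up_block_def split: if_splits)
  moreover have "r div block_size < total_dim" using rs by (meson div_le_dividend le_less_trans)
  ultimately show "total_dim - 1 - r div block_size < total_dim - 1 - s div block_size" by linarith
qed (use total_dim_pos in auto)

definition gen_up_down :: "nat \<Rightarrow> nat \<Rightarrow> complex poly" where
  "gen_up_down a b = (\<Sum>p<total_dim. \<Sum>q<total_dim. monom (pairing a b (up ^\<^sub>m p * down ^\<^sub>m q)) (p + q))"

definition gen_down_up :: "nat \<Rightarrow> nat \<Rightarrow> complex poly" where
  "gen_down_up a b = (\<Sum>p<total_dim. \<Sum>q<total_dim. monom (pairing a b (down ^\<^sub>m q * up ^\<^sub>m p)) (p + q))"

lemma scaled_powers_mult:
  fixes X Y :: "complex mat"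
  assumes "X \<in> carrier_mat total_dim total_dim" "Y \<in> carrier_mat total_dim total_dim"
  shows "(t \<cdot>\<^sub>m X) ^\<^sub>m p * (t \<cdot>\<^sub>m Y) ^\<^sub>m q = t ^ (p + q) \<cdot>\<^sub>m (X ^\<^sub>m p * Y ^\<^sub>m q)"
  using assms by (simp add: smult_pow_mat[OF assms(1)] smult_pow_mat[OF assms(2)]
      mult_smult_distrib[of _ total_dim total_dim _ total_dim] mult_smult_assoc_mat[of _ total_dim total_dim _ total_dim]
      smult_smult_mat power_add mult.commute)

lemma pairing_double_mat_sum:
  assumes "\<And>p q. F p q \<in> carrier_mat total_dim total_dim"
  shows "pairing a b (mat_sum total_dim (\<lambda>p. mat_sum total_dim (F p) total_dim) total_dim)
    = (\<Sum>p<total_dim. \<Sum>q<total_dim. pairing a b (F p q))"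
  using assms by (simp add: pairing_mat_sum)

definition resolvent :: "complex mat \<Rightarrow> complex \<Rightarrow> complex mat" where
  "resolvent X t = mat_sum total_dim (\<lambda>p. (t \<cdot>\<^sub>m X) ^\<^sub>m p) total_dim"

lemma resolvent_carrier[simp]: "X \<in> carrier_mat total_dim total_dim \<Longrightarrow> resolvent X t \<in> carrier_mat total_dim total_dim"
  by (simp add: resolvent_def)

lemma poly_gen_up_down: "poly (gen_up_down a b) t = pairing a b (resolvent up t * resolvent down t)"
proof -
  have "resolvent up t * resolvent down t
      = mat_sum total_dim (\<lambda>p. mat_sum total_dim (\<lambda>q. t ^ (p + q) \<cdot>\<^sub>m (up ^\<^sub>m p * down ^\<^sub>m q)) total_dim) total_dim"
    unfolding resolvent_def by (subst mat_sum_mult_mat_sum) (auto simp: scaled_powers_mult)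
  moreover have "t ^ (p + q) \<cdot>\<^sub>m (up ^\<^sub>m p * down ^\<^sub>m q) \<in> carrier_mat total_dim total_dim" for p q
    by (simp add: mult_carrier_mat[of _ total_dim total_dim])
  ultimately show ?thesis
    by (simp add: pairing_double_mat_sum gen_up_down_def poly_sum poly_monom pairing_smult
        mult_carrier_mat[of _ total_dim total_dim])
      (simp add: mult.commute)
qed

lemma poly_gen_down_up: "poly (gen_down_up a b) t = pairing a b (resolvent down t * resolvent up t)"
proof -
  have "resolvent down t * resolvent up t
      = mat_sum total_dim (\<lambda>q. mat_sum total_dim (\<lambda>p. t ^ (q + p) \<cdot>\<^sub>m (down ^\<^sub>m q * up ^\<^sub>m p)) total_dim) total_dim"
    unfolding resolvent_def by (subst mat_sum_mult_mat_sum) (auto simp: scaled_powers_mult)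
  moreover have "t ^ (q + p) \<cdot>\<^sub>m (down ^\<^sub>m q * up ^\<^sub>m p) \<in> carrier_mat total_dim total_dim" for p q
    by (simp add: mult_carrier_mat[of _ total_dim total_dim])
  ultimately show ?thesis
    by (simp add: pairing_double_mat_sum gen_down_up_def poly_sum poly_monom pairing_smult
        mult_carrier_mat[of _ total_dim total_dim])
      (subst sum.swap, simp add: mult.commute add.commute)
qed

lemma resolvent_inverse:
  assumes X: "X \<in> carrier_mat total_dim total_dim" and nil: "X ^\<^sub>m total_dim = 0\<^sub>m total_dim total_dim"
  shows "(1\<^sub>m total_dim - t \<cdot>\<^sub>m X) * resolvent X t = 1\<^sub>m total_dim"
    "resolvent X t * (1\<^sub>m total_dim - t \<cdot>\<^sub>m X) = 1\<^sub>m total_dim"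
  using nilpotent_one_minus_inverse[of "t \<cdot>\<^sub>m X" total_dim total_dim] X nil
  by (simp_all add: resolvent_def smult_pow_mat[OF X])

(* T - S is a conjugate of the commutator of 1 - t up and 1 - t down. *)
lemma resolvent_products_difference:
  fixes t :: complex
  defines "T \<equiv> resolvent up t * resolvent down t" and "S \<equiv> resolvent down t * resolvent up t"
  shows "T - S = (- (t^2)) \<cdot>\<^sub>m (T * (gamma k * delta k) * S + T * (gamma k' * delta k') * S)"
proof -
  define N U D where "N = total_dim" and "U = t \<cdot>\<^sub>m up" and "D = t \<cdot>\<^sub>m down"
  have U: "U \<in> carrier_mat N N" and D: "D \<in> carrier_mat N N" by (auto simp: U_def D_def N_def)
  have T: "T \<in> carrier_mat N N" and S: "S \<in> carrier_mat N N"
    by (auto simp: T_def S_def N_def mult_carrier_mat[of _ total_dim total_dim])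
  have "U * D - D * U = (- (t^2)) \<cdot>\<^sub>m (down * up - up * down)"
    unfolding U_def D_def N_def
    by (intro eq_matI) (auto simp: mult_smult_distrib[of _ total_dim total_dim _ total_dim]
        mult_smult_assoc_mat[of _ total_dim total_dim _ total_dim] algebra_simps power2_eq_square)
  then have "T - S = T * ((- (t^2)) \<cdot>\<^sub>m (gamma k * delta k + gamma k' * delta k')) * S"
    using commutator_of_inverses[of "1\<^sub>m N - U" N "resolvent up t" "1\<^sub>m N - D" "resolvent down t"]
      commutator_one_minus[OF D U] U D commutator_down_up
      resolvent_inverse[OF up_carrier up_nilpotent] resolvent_inverse[OF down_carrier down_nilpotent]
    by (simp add: T_def S_def U_def D_def N_def minus_carrier_mat)
  also have "\<dots> = (- (t^2)) \<cdot>\<^sub>m (T * (gamma k * delta k) * S + T * (gamma k' * delta k') * S)"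
    using T S by (simp add: N_def mult_smult_distrib[of _ total_dim total_dim _ total_dim]
        mult_smult_assoc_mat[of _ total_dim total_dim _ total_dim]
        mult_add_distrib_mat[of _ total_dim total_dim _ total_dim]
        add_mult_distrib_mat[of _ total_dim total_dim _ _ total_dim] mult_carrier_mat[of _ total_dim total_dim])
  finally show ?thesis .
qed

lemma generating_relation:
  "gen_up_down a b - gen_down_up a b
    = - monom 1 2 * (gen_up_down a k * gen_down_up k b + gen_up_down a k' * gen_down_up k' b)"
proof (rule poly_eq_poly_eq_iff[THEN iffD1], rule ext)
  fix t :: complex
  define T S where "T = resolvent up t * resolvent down t" and "S = resolvent down t * resolvent up t"
  have "T \<in> carrier_mat total_dim total_dim" "S \<in> carrier_mat total_dim total_dim"
    by (auto simp: T_def S_def mult_carrier_mat[of _ total_dim total_dim])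
  then have "pairing a b T - pairing a b S = - (t^2) * (pairing a k T * pairing k b S + pairing a k' T * pairing k' b S)"
    using resolvent_products_difference[of t, folded T_def S_def]
    by (simp add: pairing_diff[symmetric] pairing_smult pairing_add pairing_through_framing
        mult_carrier_mat[of _ total_dim total_dim])
  then show "poly (gen_up_down a b - gen_down_up a b) t
      = poly (- monom 1 2 * (gen_up_down a k * gen_down_up k b + gen_up_down a k' * gen_down_up k' b)) t"
    by (simp add: poly_gen_up_down poly_gen_down_up T_def S_def poly_monom)
qed

lemma generating_polys_adjugate:
  "gen_up_down k k = - gen_down_up k' k' \<and> gen_up_down k' k' = - gen_down_up k k
    \<and> gen_up_down k k' = gen_down_up k k' \<and> gen_up_down k' k = gen_down_up k' k"
  by (rule poly_2x2_relation_adjugate[OF _ _ generating_relation generating_relation generating_relation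
        generating_relation]) (simp_all add: poly_monom)

lemma coeff_gen_up_down:
  assumes a: "a \<in> {k, k'}" and b: "b \<in> {k, k'}" and "q < b" "b - q + p = a"
  shows "coeff (gen_up_down a b) (p + q) = (-1)^(flips (b-q) p) * path_value a (b-q) b"
proof -
  have "p < total_dim" "q < total_dim" using assms framing_bounds[OF a] framing_bounds[OF b] total_dim_ge
    by linarith+
  then have "coeff (gen_up_down a b) (p + q) = pairing a b (up ^\<^sub>m p * down ^\<^sub>m q)"
    unfolding gen_up_down_def
    by (rule coeff_monom_double_sum) (use assms in \<open>auto simp: pairing_up_down split: if_splits\<close>)
  then show ?thesis using assms by (simp add: pairing_up_down)
qed

lemma coeff_gen_down_up:
  assumes a: "a \<in> {k, k'}" and b: "b \<in> {k, k'}" and "b + p \<le> 2*n-1" "q < b + p" "b + p - q = a"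
  shows "coeff (gen_down_up a b) (p + q) = (-1)^(flips b p) * path_value a (b+p) b"
proof -
  have "p < total_dim" "q < total_dim" using assms total_dim_ge k_less by arith+
  then have "coeff (gen_down_up a b) (p + q) = pairing a b (down ^\<^sub>m q * up ^\<^sub>m p)"
    unfolding gen_down_up_def
    by (rule coeff_monom_double_sum) (use assms in \<open>auto simp: pairing_down_up split: if_splits\<close>)
  then show ?thesis using assms by (simp add: pairing_down_up)
qed

lemma framed_path_eq_smult:
  assumes "a \<in> {k, k'}" "b \<in> {k, k'}" "a' \<in> {k, k'}" "b' \<in> {k, k'}"
    and "path_value a q b = c * path_value a' q' b'"
  shows "\<Delta> a * path3 B v a q b * \<Gamma> b = c \<cdot>\<^sub>m (\<Delta> a' * path3 B v a' q' b' * \<Gamma> b')"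
proof -
  have "dim_row (\<Delta> x) = 1" "dim_col (\<Gamma> x) = 1" if "x \<in> {k, k'}" for x
    using Delta_carrier[OF that] Gamma_carrier[OF that] by auto
  then have dims: "dim_row (\<Delta> a) = 1" "dim_col (\<Gamma> b) = 1" "dim_row (\<Delta> a') = 1" "dim_col (\<Gamma> b') = 1"
    using assms(1-4) by auto
  show ?thesis
  proof (rule eq_matI)
    fix i j assume "i < dim_row (c \<cdot>\<^sub>m (\<Delta> a' * path3 B v a' q' b' * \<Gamma> b'))"
      "j < dim_col (c \<cdot>\<^sub>m (\<Delta> a' * path3 B v a' q' b' * \<Gamma> b'))"
    then have "i = 0" "j = 0" using dims by auto
    then show "(\<Delta> a * path3 B v a q b * \<Gamma> b) $$ (i, j) = (c \<cdot>\<^sub>m (\<Delta> a' * path3 B v a' q' b' * \<Gamma> b')) $$ (i, j)"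
      using assms(5) dims unfolding path_value_def by (simp del: index_mult_mat(1))
  qed (use dims in simp_all)
qed

lemma framed_loop_at_k:
  assumes "1 \<le> j" "j \<le> k"
  shows "\<Delta> k * path3 B v k (k-j+1) k * \<Gamma> k = (-1)^j \<cdot>\<^sub>m (\<Delta> k' * path3 B v k' (k'+j-1) k' * \<Gamma> k')"
proof -
  define m where "m = j - 1"
  have m: "m < k" "k - j + 1 = k - m" "k' + j - 1 = k' + m" "j = m + 1" using assms by (auto simp: m_def)
  have "flips (k-m) m = 0" "flips k' m = m" using m k_less k'_bounds unfolding flips_def by auto
  moreover have "coeff (gen_up_down k k) (m + m) = (-1)^(flips (k-m) m) * path_value k (k-m) k"
    using m by (intro coeff_gen_up_down) auto
  moreover have "coeff (gen_down_up k' k') (m + m) = (-1)^(flips k' m) * path_value k' (k'+m) k'"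
    using m k'_bounds by (intro coeff_gen_down_up) auto
  ultimately have "path_value k (k-m) k = (-1)^j * path_value k' (k'+m) k'"
    using generating_polys_adjugate m(4) by simp
  then show ?thesis unfolding m(2,3) by (intro framed_path_eq_smult) auto
qed

lemma framed_path_from_k':
  assumes "1 \<le> j" "j \<le> k"
  shows "\<Delta> k * path3 B v k (k-j+1) k' * \<Gamma> k' = (-1)^(j-1) \<cdot>\<^sub>m (\<Delta> k * path3 B v k (k'+j-1) k' * \<Gamma> k')"
proof -
  define m q where "m = j - 1" and "q = k' - k + m"
  have m: "m < k" "k - j + 1 = k - m" "k' + j - 1 = k' + m" "j - 1 = m" using assms by (auto simp: m_def)
  have q: "k' - q = k - m" "k' + m - q = k" using m k'_bounds by (auto simp: q_def)
  have "flips (k-m) m = 0" "flips k' m = m" using m k_less k'_bounds unfolding flips_def by auto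
  moreover have "coeff (gen_up_down k k') (m + q) = (-1)^(flips (k' - q) m) * path_value k (k' - q) k'"
    using m q k'_bounds by (intro coeff_gen_up_down) auto
  moreover have "coeff (gen_down_up k k') (m + q) = (-1)^(flips k' m) * path_value k (k'+m) k'"
    using m q k'_bounds k_pos by (intro coeff_gen_down_up) auto
  ultimately have "path_value k (k-m) k' = (-1)^m * path_value k (k'+m) k'"
    using generating_polys_adjugate by (simp add: q(1))
  then show ?thesis unfolding m(2,3,4) by (intro framed_path_eq_smult) auto
qed

lemma framed_path_from_k:
  assumes "1 \<le> j" "j \<le> k"
  shows "\<Delta> k' * path3 B v k' (k-j+1) k * \<Gamma> k = (-1)^(j-1) \<cdot>\<^sub>m (\<Delta> k' * path3 B v k' (k'+j-1) k * \<Gamma> k)"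
proof -
  define m p where "m = j - 1" and "p = k' - k + m"
  have m: "m < k" "k - j + 1 = k - m" "k' + j - 1 = k' + m" "j - 1 = m" using assms by (auto simp: m_def)
  have p: "k - m + p = k'" "k + p - m = k'" "k + p = k' + m" using m k'_bounds by (auto simp: p_def)
  have "flips (k-m) p = k' - n" "flips k p = (k' - n) + m"
    using p k_less k'_bounds unfolding flips_def by (auto simp: max_def)
  moreover have "coeff (gen_up_down k' k) (p + m) = (-1)^(flips (k-m) p) * path_value k' (k-m) k"
    using m p by (intro coeff_gen_up_down) auto
  moreover have "coeff (gen_down_up k' k) (p + m) = (-1)^(flips k p) * path_value k' (k+p) k"
    using m p k'_bounds by (intro coeff_gen_down_up) auto
  ultimately have "(-1)^(k'-n) * path_value k' (k-m) k = (-1)^(k'-n) * ((-1)^m * path_value k' (k'+m) k)"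
    using generating_polys_adjugate by (simp add: power_add p(3))
  then have "path_value k' (k-m) k = (-1)^m * path_value k' (k'+m) k" by simp
  then show ?thesis unfolding m(2,3,4) by (intro framed_path_eq_smult) auto
qed

lemma framed_loop_at_k':
  assumes "1 \<le> j" "j \<le> k'"
  shows "\<Delta> k' * path3 B v k' (k'-j+1) k' * \<Gamma> k' = (-1)^j \<cdot>\<^sub>m (\<Delta> k * path3 B v k (k+j-1) k * \<Gamma> k)"
proof -
  define m where "m = j - 1"
  have m: "m < k'" "k' - j + 1 = k' - m" "k + j - 1 = k + m" "j = m + 1" using assms by (auto simp: m_def)
  have "flips (k'-m) m = min m (n-k)"
    using m k_less k'_bounds unfolding flips_def max_def min_def by (auto split: if_splits; arith)
  moreover have "flips k m = k + m - n" using k_less unfolding flips_def by simp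
  moreover have "coeff (gen_up_down k' k') (m + m) = (-1)^(flips (k'-m) m) * path_value k' (k'-m) k'"
    using m by (intro coeff_gen_up_down) auto
  moreover have "coeff (gen_down_up k k) (m + m) = (-1)^(flips k m) * path_value k (k+m) k"
    using m k_pos k'_bounds by (intro coeff_gen_down_up) auto
  ultimately have "(-1)^(min m (n-k)) * path_value k' (k'-m) k' = (-1)^(k+m-n+1) * path_value k (k+m) k"
    using generating_polys_adjugate by simp
  moreover have "min m (n-k) + (k+m-n+1) = j" using m k_less by (simp add: min_def)
  ultimately have "path_value k' (k'-m) k' = (-1)^j * path_value k (k+m) k"
    by (metis neg_one_power_cancel)
  then show ?thesis unfolding m(2,3) by (intro framed_path_eq_smult) auto
qed

end

theorem lemma4p14:
  fixes n k :: nat and v :: "nat \<Rightarrow> nat"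
    and B :: "nat \<Rightarrow> nat \<Rightarrow> complex mat" and \<Gamma> \<Delta> :: "nat \<Rightarrow> complex mat"
  assumes "1 \<le> k" and "k < n"
    and "\<forall>i. 1 \<le> i \<and> i \<le> 2*n-1 \<longrightarrow> v i = v (2*n-i)"
    and "nonempty_cond n k v"
    and "Lambda_A n v (\<lambda>i. if i = k \<or> i = 2*n-k then 1 else 0) B \<Gamma> \<Delta>"
  shows "(\<forall>j. 1 \<le> j \<and> j \<le> k \<longrightarrow>
            \<Delta> k * path3 B v k (k-j+1) k * \<Gamma> k
              = (-1)^j \<cdot>\<^sub>m (\<Delta> (2*n-k) * path3 B v (2*n-k) (2*n-k+j-1) (2*n-k) * \<Gamma> (2*n-k))
          \<and> \<Delta> k * path3 B v k (k-j+1) (2*n-k) * \<Gamma> (2*n-k)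
              = (-1)^(j-1) \<cdot>\<^sub>m (\<Delta> k * path3 B v k (2*n-k+j-1) (2*n-k) * \<Gamma> (2*n-k))
          \<and> \<Delta> (2*n-k) * path3 B v (2*n-k) (k-j+1) k * \<Gamma> k
              = (-1)^(j-1) \<cdot>\<^sub>m (\<Delta> (2*n-k) * path3 B v (2*n-k) (2*n-k+j-1) k * \<Gamma> k))
       \<and> (\<forall>j. 1 \<le> j \<and> j \<le> 2*n-k \<longrightarrow>
            \<Delta> (2*n-k) * path3 B v (2*n-k) (2*n-k-j+1) (2*n-k) * \<Gamma> (2*n-k)
              = (-1)^j \<cdot>\<^sub>m (\<Delta> k * path3 B v k (k+j-1) k * \<Gamma> k))"
proof -
  interpret lambda_point n k v B \<Gamma> \<Delta>
    using assms(1,2,5) by unfold_locales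
  show ?thesis
    unfolding k'_def[symmetric]
    using framed_loop_at_k framed_path_from_k' framed_path_from_k framed_loop_at_k' by blast
qed

end
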